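(* Let $a, b$ be positive integers with $b > 2a$, and let $T_{a,b} = \{C_{i,1} : 1 \le i \le 2a+1\} \cup \{C_{a+1,j} : 2 \le j \le b+1\}$, of size $n = 2a+b+1$. Then on the $n \times n$ board, $$\mathrm{cp}_{\mathrm{fixed}}(T_{a,b}) = \left\lceil \frac{b+1}{2a+1} \right\rceil.$$
   Context: For integers $i,j$, $C_{i,j}$ denotes the unit square cell in column $i$ and row $j$ of the integer grid (columns numbered left to right, rows numbered top to bottom). A polyomino is a finite set of cells; its size is its number of cells. For a polyomino $\mathcal{P}$ of size $n$ the board is $\mathbb{B} = \{C_{i,j} : 1 \le i,j \le n\}$. The shift of $\mathcal{P}$ by integers $(c,d)$ is $\mathcal{P}+(c,d) = \{C_{x+c,y+d} : C_{x,y} \in \mathcal{P}\}$; a fixed copy of $\mathcal{P}$ is any shift of $\mathcal{P}$ (no rotations). A set of polyominoes is a valid arrangement if each is contained in $\mathbb{B}$ and they are pairwise disjoint. A fixed packing of $\mathcal{P}$ is a set of fixed copies of $\mathcal{P}$ forming a valid arrangement such that adding any further fixed copy of $\mathcal{P}$ yields an invalid arrangement. The clumsy fixed packing number $\mathrm{cp}_{\mathrm{fixed}}(\mathcal{P})$ is the minimum number of polyominoes in a fixed packing of $\mathcal{P}$ on the $n \times n$ board. *)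

theory Defs
  imports Complex_Main
begin

text \<open>A cell C_{i,j} is the pair (i,j) of integers: column i, row j.
  A polyomino is a finite set of cells.\<close>
type_synonym cell = "int \<times> int"

definition board :: "nat \<Rightarrow> cell set" where
  "board n = {1..int n} \<times> {1..int n}"

definition shift :: "cell set \<Rightarrow> int \<Rightarrow> int \<Rightarrow> cell set" where
  "shift P c d = (\<lambda>(x, y). (x + c, y + d)) ` P"

definition fixed_copy :: "cell set \<Rightarrow> cell set \<Rightarrow> bool" where
  "fixed_copy P Q \<longleftrightarrow> (\<exists>c d. Q = shift P c d)"

definition valid_arrangement :: "nat \<Rightarrow> cell set set \<Rightarrow> bool" where
  "valid_arrangement n S \<longleftrightarrow>
     (\<forall>Q\<in>S. Q \<subseteq> board n) \<and> (\<forall>Q\<in>S. \<forall>R\<in>S. Q \<noteq> R \<longrightarrow> Q \<inter> R = {})"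

definition fixed_packing :: "nat \<Rightarrow> cell set \<Rightarrow> cell set set \<Rightarrow> bool" where
  "fixed_packing n P S \<longleftrightarrow>
     (\<forall>Q\<in>S. fixed_copy P Q) \<and> valid_arrangement n S \<and>
     (\<forall>Q. fixed_copy P Q \<and> Q \<notin> S \<longrightarrow> \<not> valid_arrangement n (insert Q S))"

definition cp_fixed :: "cell set \<Rightarrow> nat" where
  "cp_fixed P = (LEAST k. \<exists>S. fixed_packing (card P) P S \<and> card S = k)"

definition T_poly :: "nat \<Rightarrow> nat \<Rightarrow> cell set" where
  "T_poly a b = {(i, 1) | i. 1 \<le> i \<and> i \<le> 2 * int a + 1}
              \<union> {(int a + 1, j) | j. 2 \<le> j \<and> j \<le> int b + 1}"

end

theory Submission
  imports Defs
begin

text \<open>A copy of \<open>T_poly a b\<close> is determined by its offset \<open>(c, d)\<close>, and it lies on the board iff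
  \<open>0 \<le> c \<le> b\<close> and \<open>0 \<le> d \<le> 2a\<close>. As \<open>2a < b\<close>, two such copies overlap exactly when their
  columns differ by at most \<open>a\<close>, or they share a row and their columns differ by at most \<open>2a\<close>.
  So fixed packings are maximal clash-free sets of offsets.

  In such a set every column \<open>x \<in> [0, b]\<close> is within \<open>a\<close> of some offset: otherwise the copies
  at \<open>(x, 0), (x, 1), (x, 2)\<close> are each blocked by a copy in their own row at horizontal distance
  in \<open>(a, 2a]\<close>, and two of these three lie on the same side of \<open>x\<close>, hence within \<open>a\<close> of each
  other. Hence \<open>b + 1 \<le> (2a + 1) |P|\<close>. Offsets \<open>a, 3a + 1, 5a + 2, \<dots>\<close> in row \<open>0\<close>, closed by
  one copy in row \<open>1\<close>, attain this bound.\<close>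

lemma mem_shift: "(x, y) \<in> shift P c d \<longleftrightarrow> (x - c, y - d) \<in> P"
  unfolding shift_def by (force simp: image_iff)

lemma non_extendable_iff_dominating:
  assumes refl: "\<And>p. R p p" and sym: "\<And>p q. R p q \<Longrightarrow> R q p"
  shows "(\<forall>q. q \<notin> P \<longrightarrow> \<not> (q \<in> X \<and> (\<forall>p\<in>P. q \<noteq> p \<longrightarrow> \<not> R q p \<and> \<not> R p q))) \<longleftrightarrow>
           (\<forall>q\<in>X. \<exists>p\<in>P. R p q)"
proof (intro iffI ballI allI impI notI)
  fix q
  assume maximal: "\<forall>q. q \<notin> P \<longrightarrow> \<not> (q \<in> X \<and> (\<forall>p\<in>P. q \<noteq> p \<longrightarrow> \<not> R q p \<and> \<not> R p q))"
    and "q \<in> X"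
  show "\<exists>p\<in>P. R p q"
  proof (cases "q \<in> P")
    case True
    then show ?thesis
      using refl by blast
  next
    case False
    with maximal \<open>q \<in> X\<close> obtain p where "p \<in> P" "R q p \<or> R p q"
      by blast
    then show ?thesis
      using sym by blast
  qed
next
  fix q
  assume "\<forall>q\<in>X. \<exists>p\<in>P. R p q" and "q \<notin> P"
    and extendable: "q \<in> X \<and> (\<forall>p\<in>P. q \<noteq> p \<longrightarrow> \<not> R q p \<and> \<not> R p q)"
  then obtain p where "p \<in> P" "R p q" "q \<noteq> p"
    by blast
  with extendable show False
    by blast
qed

lemma same_side_close:
  fixes a x u v :: int
  assumes "a < \<bar>u - x\<bar>" "\<bar>u - x\<bar> \<le> 2 * a" "a < \<bar>v - x\<bar>" "\<bar>v - x\<bar> \<le> 2 * a"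
    and "u < x \<longleftrightarrow> v < x"
  shows "\<bar>u - v\<bar> < a"
  using assms by (cases "u < x") (simp_all add: abs_if split: if_splits)

lemma two_of_three_in_annulus_close:
  fixes a x u v w :: int
  assumes "a < \<bar>u - x\<bar>" "\<bar>u - x\<bar> \<le> 2 * a" "a < \<bar>v - x\<bar>" "\<bar>v - x\<bar> \<le> 2 * a"
    and "a < \<bar>w - x\<bar>" "\<bar>w - x\<bar> \<le> 2 * a"
  shows "\<bar>u - v\<bar> < a \<or> \<bar>u - w\<bar> < a \<or> \<bar>v - w\<bar> < a"
  using same_side_close[OF assms(1-4)] same_side_close[OF assms(1,2,5,6)]
    same_side_close[OF assms(3-6)] by blast

lemma ceiling_Suc_divide_eq:
  fixes n m :: nat
  assumes "0 < m"
  shows "\<lceil>real (n + 1) / real m\<rceil> = int (n div m + 1)"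
proof (rule ceiling_unique)
  have n: "real n = real (n div m) * real m + real (n mod m)"
    by (metis div_mult_mod_eq of_nat_add of_nat_mult)
  have r: "real (n mod m) < real m"
    using assms by simp
  show "real_of_int (int (n div m + 1)) - 1 < real (n + 1) / real m"
    using assms n by (simp add: pos_less_divide_eq)
  show "real (n + 1) / real m \<le> real_of_int (int (n div m + 1))"
    using assms n r by (simp add: pos_divide_le_eq algebra_simps)
qed

definition T_at :: "nat \<Rightarrow> nat \<Rightarrow> int \<times> int \<Rightarrow> cell set" where
  "T_at a b p = shift (T_poly a b) (fst p) (snd p)"

definition T_offsets :: "nat \<Rightarrow> nat \<Rightarrow> (int \<times> int) set" where
  "T_offsets a b = {0..int b} \<times> {0..2 * int a}"

definition T_clash :: "nat \<Rightarrow> int \<times> int \<Rightarrow> int \<times> int \<Rightarrow> bool" where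
  "T_clash a p q \<longleftrightarrow>
     \<bar>fst p - fst q\<bar> \<le> int a \<or> (snd p = snd q \<and> \<bar>fst p - fst q\<bar> \<le> 2 * int a)"

definition maximal_clash_free :: "nat \<Rightarrow> nat \<Rightarrow> (int \<times> int) set \<Rightarrow> bool" where
  "maximal_clash_free a b P \<longleftrightarrow>
     P \<subseteq> T_offsets a b \<and> pairwise (\<lambda>p q. \<not> T_clash a p q) P \<and>
     (\<forall>q\<in>T_offsets a b. \<exists>p\<in>P. T_clash a p q)"

lemma mem_T_poly:
  "(x, y) \<in> T_poly a b \<longleftrightarrow>
     (y = 1 \<and> 1 \<le> x \<and> x \<le> 2 * int a + 1) \<or> (x = int a + 1 \<and> 2 \<le> y \<and> y \<le> int b + 1)"
  unfolding T_poly_def by auto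

lemma mem_T_at:
  "(x, y) \<in> T_at a b (c, d) \<longleftrightarrow>
     (y = d + 1 \<and> c + 1 \<le> x \<and> x \<le> c + 2 * int a + 1) \<or>
     (x = c + int a + 1 \<and> d + 2 \<le> y \<and> y \<le> d + int b + 1)"
  unfolding T_at_def by (auto simp: mem_shift mem_T_poly)

lemma card_T_poly: "card (T_poly a b) = 2 * a + b + 1"
proof -
  have "T_poly a b = (\<lambda>i. (i, 1)) ` {1..2 * int a + 1} \<union> (\<lambda>j. (int a + 1, j)) ` {2..int b + 1}"
    unfolding T_poly_def by auto
  also have "card \<dots> = card {1..2 * int a + 1} + card {2..int b + 1}"
    by (subst card_Un_disjoint) (auto simp: card_image inj_on_def)
  finally show ?thesis
    by simp
qed

lemma inj_T_at: "inj (T_at a b)"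
proof (rule injI)
  fix p q :: "int \<times> int"
  assume eq: "T_at a b p = T_at a b q"
  obtain c d c' d' where pq: "p = (c, d)" "q = (c', d')" by fastforce
  have "(c + 1, d + 1) \<in> T_at a b p" "(c' + 1, d' + 1) \<in> T_at a b q"
    unfolding pq by (simp_all add: mem_T_at)
  then have "(c + 1, d + 1) \<in> T_at a b (c', d')" "(c' + 1, d' + 1) \<in> T_at a b (c, d)"
    using eq by (simp_all add: pq)
  then show "p = q"
    unfolding pq mem_T_at by auto
qed

lemma T_at_subset_board_iff:
  assumes "0 < b"
  shows "T_at a b p \<subseteq> board (2 * a + b + 1) \<longleftrightarrow> p \<in> T_offsets a b"
proof -
  obtain c d where p: "p = (c, d)" by fastforce
  have extremes: "(c + 1, d + 1) \<in> T_at a b p" "(c + 2 * int a + 1, d + 1) \<in> T_at a b p"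
    "(c + int a + 1, d + int b + 1) \<in> T_at a b p"
    using assms by (auto simp: p mem_T_at)
  show ?thesis
  proof
    assume "T_at a b p \<subseteq> board (2 * a + b + 1)"
    with extremes show "p \<in> T_offsets a b"
      by (auto simp: p board_def T_offsets_def)
  next
    assume "p \<in> T_offsets a b"
    then show "T_at a b p \<subseteq> board (2 * a + b + 1)"
      by (auto simp: p board_def T_offsets_def mem_T_at)
  qed
qed

lemma T_clash_refl: "T_clash a p p"
  by (simp add: T_clash_def)

lemma T_clash_commute: "T_clash a p q \<longleftrightarrow> T_clash a q p"
  unfolding T_clash_def by (auto simp: abs_minus_commute)

text \<open>Since the vertical extent \<open>2 * a\<close> of the offsets is smaller than the stem length \<open>b\<close>,
  the stem of the higher copy always reaches the row of the bar of the lower one.\<close>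
lemma T_at_disjoint_iff:
  assumes "2 * a < b" and "p \<in> T_offsets a b" and "q \<in> T_offsets a b"
  shows "T_at a b p \<inter> T_at a b q = {} \<longleftrightarrow> \<not> T_clash a p q"
proof
  obtain c d c' d' where pq: "p = (c, d)" "q = (c', d')" by fastforce
  assume disjoint: "T_at a b p \<inter> T_at a b q = {}"
  show "\<not> T_clash a p q"
  proof
    assume "T_clash a p q"
    then consider "d = d'" "\<bar>c - c'\<bar> \<le> 2 * int a" | "d < d'" "\<bar>c - c'\<bar> \<le> int a"
      | "d' < d" "\<bar>c - c'\<bar> \<le> int a"
      unfolding pq T_clash_def by fastforce
    then have "\<exists>z. z \<in> T_at a b p \<and> z \<in> T_at a b q"
    proof cases
      case 1
      then show ?thesis
        by (intro exI[of _ "(max c c' + 1, d + 1)"]) (auto simp: pq mem_T_at)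
    next
      case 2
      then show ?thesis
        using assms by (intro exI[of _ "(c + int a + 1, d' + 1)"]) (auto simp: pq mem_T_at T_offsets_def)
    next
      case 3
      then show ?thesis
        using assms by (intro exI[of _ "(c' + int a + 1, d + 1)"]) (auto simp: pq mem_T_at T_offsets_def)
    qed
    with disjoint show False by blast
  qed
next
  obtain c d c' d' where pq: "p = (c, d)" "q = (c', d')" by fastforce
  assume "\<not> T_clash a p q"
  then show "T_at a b p \<inter> T_at a b q = {}"
    unfolding pq T_clash_def by (force simp: mem_T_at)
qed

lemma fixed_copy_T_poly_iff: "fixed_copy (T_poly a b) Q \<longleftrightarrow> Q \<in> range (T_at a b)"
  unfolding fixed_copy_def T_at_def by (auto simp: image_iff)

lemma valid_arrangement_T_at_iff:
  assumes "2 * a < b"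
  shows "valid_arrangement (2 * a + b + 1) (T_at a b ` P) \<longleftrightarrow>
           P \<subseteq> T_offsets a b \<and> pairwise (\<lambda>p q. \<not> T_clash a p q) P"
proof -
  have inside: "(\<forall>Q\<in>T_at a b ` P. Q \<subseteq> board (2 * a + b + 1)) \<longleftrightarrow> P \<subseteq> T_offsets a b"
    using assms T_at_subset_board_iff[of b a] by (simp add: image_subset_iff flip: subset_eq)
  have image: "pairwise (\<lambda>Q R. Q \<inter> R = {}) (T_at a b ` P) \<longleftrightarrow>
      pairwise (\<lambda>p q. T_at a b p \<inter> T_at a b q = {}) P"
    by (simp add: pairwise_image inj_eq[OF inj_T_at] pairwise_def)
  have clash: "pairwise (\<lambda>p q. T_at a b p \<inter> T_at a b q = {}) P \<longleftrightarrow>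
      pairwise (\<lambda>p q. \<not> T_clash a p q) P" if "P \<subseteq> T_offsets a b"
    using that T_at_disjoint_iff[OF assms] unfolding pairwise_def by (meson subsetD)
  show ?thesis
    unfolding valid_arrangement_def pairwise_def[symmetric] inside image
    using clash by blast
qed

lemma fixed_packing_T_at_iff:
  assumes "2 * a < b"
  shows "fixed_packing (2 * a + b + 1) (T_poly a b) (T_at a b ` P) \<longleftrightarrow> maximal_clash_free a b P"
proof -
  let ?valid = "valid_arrangement (2 * a + b + 1)"
  let ?addable = "\<lambda>q. q \<in> T_offsets a b \<and> (\<forall>p\<in>P. q \<noteq> p \<longrightarrow> \<not> T_clash a q p \<and> \<not> T_clash a p q)"
  have valid_insert: "?valid (T_at a b ` insert q P) \<longleftrightarrow> ?valid (T_at a b ` P) \<and> ?addable q" for q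
    unfolding valid_arrangement_T_at_iff[OF assms] pairwise_insert insert_subset by auto
  have domination: "(\<forall>q. q \<notin> P \<longrightarrow> \<not> ?addable q) \<longleftrightarrow> (\<forall>q\<in>T_offsets a b. \<exists>p\<in>P. T_clash a p q)"
    by (rule non_extendable_iff_dominating) (use T_clash_refl T_clash_commute in blast)+
  have "fixed_packing (2 * a + b + 1) (T_poly a b) (T_at a b ` P) \<longleftrightarrow>
      ?valid (T_at a b ` P) \<and> (\<forall>q. q \<notin> P \<longrightarrow> \<not> ?valid (T_at a b ` insert q P))"
    unfolding fixed_packing_def
    by (auto simp: fixed_copy_T_poly_iff inj_image_mem_iff[OF inj_T_at])
  also have "\<dots> \<longleftrightarrow> ?valid (T_at a b ` P) \<and> (\<forall>q. q \<notin> P \<longrightarrow> \<not> ?addable q)"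
    unfolding valid_insert by blast
  also have "\<dots> \<longleftrightarrow> maximal_clash_free a b P"
    unfolding domination maximal_clash_free_def valid_arrangement_T_at_iff[OF assms] by blast
  finally show ?thesis .
qed

lemma cp_fixed_T_poly_eq:
  assumes "2 * a < b"
  shows "cp_fixed (T_poly a b) = (LEAST k. \<exists>P. maximal_clash_free a b P \<and> card P = k)"
proof -
  have card_T_at: "card (T_at a b ` P) = card P" for P
    by (rule card_image[OF inj_on_subset[OF inj_T_at subset_UNIV]])
  have "(\<exists>S. fixed_packing (card (T_poly a b)) (T_poly a b) S \<and> card S = k) \<longleftrightarrow>
      (\<exists>P. maximal_clash_free a b P \<and> card P = k)" for k
  proof
    assume "\<exists>S. fixed_packing (card (T_poly a b)) (T_poly a b) S \<and> card S = k"
    then obtain S where S: "fixed_packing (2 * a + b + 1) (T_poly a b) S" "card S = k"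
      by (auto simp: card_T_poly)
    let ?P = "T_at a b -` S"
    have S_eq: "T_at a b ` ?P = S"
      using S(1) by (auto simp: fixed_packing_def fixed_copy_T_poly_iff)
    have "maximal_clash_free a b ?P"
      unfolding fixed_packing_T_at_iff[OF assms, symmetric] S_eq by (rule S(1))
    moreover have "card ?P = k"
      using S(2) card_T_at[of ?P, unfolded S_eq] by simp
    ultimately show "\<exists>P. maximal_clash_free a b P \<and> card P = k"
      by blast
  next
    assume "\<exists>P. maximal_clash_free a b P \<and> card P = k"
    then obtain P where P: "maximal_clash_free a b P" "card P = k"
      by blast
    have "fixed_packing (card (T_poly a b)) (T_poly a b) (T_at a b ` P)"
      unfolding card_T_poly fixed_packing_T_at_iff[OF assms] by (rule P(1))
    moreover have "card (T_at a b ` P) = k"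
      using P(2) card_T_at by simp
    ultimately show "\<exists>S. fixed_packing (card (T_poly a b)) (T_poly a b) S \<and> card S = k"
      by blast
  qed
  then show ?thesis
    unfolding cp_fixed_def by simp
qed

lemma maximal_clash_free_covers_columns:
  assumes "0 < a" and P: "maximal_clash_free a b P" and x: "x \<in> {0..int b}"
  shows "\<exists>p\<in>P. \<bar>fst p - x\<bar> \<le> int a"
proof (rule ccontr)
  assume "\<not> ?thesis"
  then have far: "int a < \<bar>fst p - x\<bar>" if "p \<in> P" for p
    using that by force
  have "\<exists>p\<in>P. snd p = y \<and> \<bar>fst p - x\<bar> \<le> 2 * int a" if "0 \<le> y" "y \<le> 2" for y
  proof -
    have "(x, y) \<in> T_offsets a b"
      using assms that by (auto simp: T_offsets_def)
    then obtain p where "p \<in> P" "T_clash a p (x, y)"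
      using P by (auto simp: maximal_clash_free_def)
    moreover from this have "snd p = y \<and> \<bar>fst p - x\<bar> \<le> 2 * int a"
      using far[of p] by (auto simp: T_clash_def)
    ultimately show ?thesis
      by blast
  qed
  then obtain p0 p1 p2 where p: "p0 \<in> P" "p1 \<in> P" "p2 \<in> P"
    and rows: "snd p0 = 0" "snd p1 = 1" "snd p2 = 2"
    and near: "\<bar>fst p0 - x\<bar> \<le> 2 * int a" "\<bar>fst p1 - x\<bar> \<le> 2 * int a" "\<bar>fst p2 - x\<bar> \<le> 2 * int a"
    by (meson order_refl zero_le_numeral zero_le_one one_le_numeral)
  have apart: "int a < \<bar>fst p - fst q\<bar>" if "p \<in> P" "q \<in> P" "snd p \<noteq> snd q" for p q
  proof -
    have "\<not> T_clash a p q"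
      using P that unfolding maximal_clash_free_def pairwise_def by auto
    then show ?thesis
      by (simp add: T_clash_def)
  qed
  have "int a < \<bar>fst p0 - fst p1\<bar>" "int a < \<bar>fst p0 - fst p2\<bar>" "int a < \<bar>fst p1 - fst p2\<bar>"
    using apart p rows by simp_all
  with two_of_three_in_annulus_close[OF far[OF p(1)] near(1) far[OF p(2)] near(2) far[OF p(3)] near(3)]
  show False
    by linarith
qed

lemma maximal_clash_free_card_ge:
  assumes "0 < a" and P: "maximal_clash_free a b P"
  shows "b + 1 \<le> card P * (2 * a + 1)"
proof -
  have "finite P"
    using P finite_subset by (auto simp: maximal_clash_free_def T_offsets_def)
  have "{0..int b} \<subseteq> (\<Union>p\<in>P. {fst p - int a..fst p + int a})"
    using maximal_clash_free_covers_columns[OF assms] by force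
  then have "card {0..int b} \<le> card (\<Union>p\<in>P. {fst p - int a..fst p + int a})"
    by (rule card_mono[rotated]) (use \<open>finite P\<close> in simp)
  also have "\<dots> \<le> (\<Sum>p\<in>P. card {fst p - int a..fst p + int a})"
    by (rule card_UN_le[OF \<open>finite P\<close>])
  also have "\<dots> = card P * (2 * a + 1)"
    by (simp add: nat_add_distrib nat_mult_distrib)
  finally show ?thesis
    by simp
qed

text \<open>The last copy may lie within \<open>2a\<close> of its neighbour; lifted to row \<open>1\<close> it only has to
  keep distance \<open>a\<close>.\<close>
definition spread_offsets :: "nat \<Rightarrow> nat \<Rightarrow> nat \<Rightarrow> (int \<times> int) set" where
  "spread_offsets a b j =
     (\<lambda>i. (int a + int i * (2 * int a + 1), 0)) ` {..<j} \<union>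
     {(min (int a + int j * (2 * int a + 1)) (int b), 1)}"

lemma card_spread_offsets: "card (spread_offsets a b j) = j + 1"
proof -
  have "inj_on (\<lambda>i. (int a + int i * (2 * int a + 1), 0 :: int)) {..<j}"
    by (rule inj_onI) simp
  then show ?thesis
    unfolding spread_offsets_def by (subst card_Un_disjoint) (auto simp: card_image)
qed

lemma spread_offset_right_margin:
  assumes "j * (2 * a + 1) \<le> b" and "i < j"
  shows "int a + int i * (2 * int a + 1) + int a < int b"
proof -
  have "(int i + 1) * (2 * int a + 1) \<le> int j * (2 * int a + 1)"
    using assms(2) by (intro mult_right_mono) auto
  moreover have "int j * (2 * int a + 1) \<le> int b"
    using assms(1) of_nat_le_iff[of "j * (2 * a + 1)" b, where 'a = int] by (simp add: algebra_simps)
  ultimately show ?thesis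
    by (simp add: algebra_simps)
qed

lemma spread_offsets_covers_columns:
  assumes "b < (j + 1) * (2 * a + 1)" and "x \<in> {0..int b}"
  shows "\<exists>p\<in>spread_offsets a b j. \<bar>fst p - x\<bar> \<le> int a"
proof -
  let ?m = "2 * int a + 1"
  have b_less: "int b < int j * ?m + ?m"
    using assms(1) of_nat_less_iff[of b "(j + 1) * (2 * a + 1)", where 'a = int] by (simp add: algebra_simps)
  show ?thesis
  proof (cases "x < int j * ?m")
    case True
    define i where "i = x div ?m"
    have "0 \<le> i"
      using assms(2) by (simp add: i_def pos_imp_zdiv_nonneg_iff)
    have "i < int j"
    proof (rule ccontr)
      assume "\<not> i < int j"
      then have "int j * ?m \<le> i * ?m"
        by (intro mult_right_mono) auto
      moreover have "i * ?m \<le> x"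
        using pos_mod_sign[of ?m x] div_mult_mod_eq[of x ?m] unfolding i_def by linarith
      ultimately show False
        using True by linarith
    qed
    have "\<bar>int a + i * ?m - x\<bar> \<le> int a"
      using pos_mod_sign[of ?m x] pos_mod_bound[of ?m x] div_mult_mod_eq[of x ?m]
      unfolding i_def by linarith
    moreover have "(int a + i * ?m, 0) \<in> spread_offsets a b j"
      using \<open>0 \<le> i\<close> \<open>i < int j\<close> unfolding spread_offsets_def
      by (auto intro!: image_eqI[of _ _ "nat i"])
    ultimately show ?thesis
      by force
  next
    case False
    then have "\<bar>min (int a + int j * ?m) (int b) - x\<bar> \<le> int a"
      using assms(2) b_less by (auto simp: min_def abs_le_iff)
    then show ?thesis
      unfolding spread_offsets_def by force
  qed
qed

lemma spread_offsets_clash_free: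
  assumes "j * (2 * a + 1) \<le> b"
  shows "pairwise (\<lambda>p q. \<not> T_clash a p q) (spread_offsets a b j)"
proof -
  let ?m = "2 * int a + 1"
  let ?low = "(\<lambda>i. (int a + int i * ?m, 0 :: int)) ` {..<j}"
  let ?top = "(min (int a + int j * ?m) (int b), 1 :: int)"
  have low: "pairwise (\<lambda>p q. \<not> T_clash a p q) ?low"
  proof (rule pairwise_imageI)
    fix i i' :: nat
    assume "i \<noteq> i'"
    then have "?m \<le> \<bar>int i - int i'\<bar> * ?m"
      by (intro mult_le_cancel_right1[THEN iffD2]) auto
    also have "\<dots> = \<bar>(int a + int i * ?m) - (int a + int i' * ?m)\<bar>"
      by (simp add: abs_mult flip: left_diff_distrib)
    finally show "\<not> T_clash a (int a + int i * ?m, 0) (int a + int i' * ?m, 0)"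
      by (simp add: T_clash_def)
  qed
  have top: "\<not> T_clash a ?top p" if "p \<in> ?low" for p
  proof -
    obtain i where i: "i < j" "p = (int a + int i * ?m, 0)"
      using \<open>p \<in> ?low\<close> by blast
    have "(int i + 1) * ?m \<le> int j * ?m"
      using i(1) by (intro mult_right_mono) auto
    then have "int a < min (int a + int j * ?m) (int b) - (int a + int i * ?m)"
      using spread_offset_right_margin[OF assms i(1)] by (simp add: algebra_simps)
    then show ?thesis
      by (simp add: i(2) T_clash_def)
  qed
  have "spread_offsets a b j = insert ?top ?low"
    unfolding spread_offsets_def by auto
  then show ?thesis
    using low top T_clash_commute by (simp add: pairwise_insert)
qed

lemma spread_offsets_maximal_clash_free:
  assumes "0 < a" and "j * (2 * a + 1) \<le> b" and "b < (j + 1) * (2 * a + 1)"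
  shows "maximal_clash_free a b (spread_offsets a b j)"
proof -
  have "spread_offsets a b j \<subseteq> T_offsets a b"
    using assms(1) spread_offset_right_margin[OF assms(2)]
    by (force simp: spread_offsets_def T_offsets_def)
  moreover have "\<exists>p\<in>spread_offsets a b j. T_clash a p q" if "q \<in> T_offsets a b" for q
    using that spread_offsets_covers_columns[OF assms(3), of "fst q"]
    by (force simp: T_offsets_def T_clash_def)
  ultimately show ?thesis
    using spread_offsets_clash_free[OF assms(2)] by (simp add: maximal_clash_free_def)
qed

theorem theorem7:
  fixes a b :: nat
  assumes "0 < a" and "0 < b" and "b > 2 * a"
  shows "card (T_poly a b) = 2 * a + b + 1 \<and>
         int (cp_fixed (T_poly a b)) = ceiling (real (b + 1) / real (2 * a + 1))"
proof -
  define j where "j = b div (2 * a + 1)"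
  have j: "j * (2 * a + 1) \<le> b" "b < (j + 1) * (2 * a + 1)"
    unfolding j_def distrib_right mult_1
    using div_mult_mod_eq[of b "2 * a + 1"] mod_less_divisor[of "2 * a + 1" b] by linarith+
  have "cp_fixed (T_poly a b) = j + 1"
    unfolding cp_fixed_T_poly_eq[OF assms(3)]
  proof (rule Least_equality)
    show "\<exists>P. maximal_clash_free a b P \<and> card P = j + 1"
      using spread_offsets_maximal_clash_free[OF assms(1) j] card_spread_offsets by blast
  next
    fix k
    assume "\<exists>P. maximal_clash_free a b P \<and> card P = k"
    then have "b + 1 \<le> k * (2 * a + 1)"
      using maximal_clash_free_card_ge[OF assms(1)] by blast
    moreover have "k * (2 * a + 1) \<le> j * (2 * a + 1)" if "k \<le> j"
      using that by (rule mult_le_mono1)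
    ultimately show "j + 1 \<le> k"
      using j(1) by linarith
  qed
  then show ?thesis
    using card_T_poly ceiling_Suc_divide_eq[of "2 * a + 1" b] by (simp add: j_def)
qed

end
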